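(* Let $P_o^*(k,l)\subset P(k,l)$ be the set of pairings $p\in P(k,l)$ (all blocks of size 2) such that every block of $p$ crosses an even number of other blocks of $p$. Then $P_o^*$ is a full category of partitions.
   Context: $P(k,l)$ is the set of partitions of a set of $k$ upper points labelled $1,\dots,k$ (top row) and $l$ lower points labelled $1,\dots,l$ (bottom row). Two blocks $\{a,b\}$ and $\{c,d\}$ of a pairing cross if, listing the points in the cyclic order upper $1,\dots,k$ then lower $l,\dots,1$ and writing $a<b$, $c<d$ in this order, one has $a<c<b<d$ or $c<a<d<b$ (equivalently, the parity of the number of crossings of each string in a drawing of the pairing in the strip between the rows, which does not depend on the drawing). Tensor product $p\otimes q$: place $q$ to the right of $p$. Composition: for $p\in P(m,l)$, $q\in P(k,m)$, $pq\in P(k,l)$ places $q$ above $p$, identifies the lower points of $q$ with the upper points of $p$, merges blocks connected through these middle points, and deletes the middle points and all blocks consisting only of middle points. Involution $p^*\in P(l,k)$: upside-down reflection. A full category of partitions is a family of subsets $P_x(k,l)\subset P(k,l)$ stable under tensor product, composition and involution, and containing $|\in P(1,1)$ (one block joining the upper and the lower point) and $\sqcap\in P(0,2)$ (one block with both lower points). *)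

theory Defs
  imports "HOL-Library.Disjoint_Sets"
begin

datatype pt = Up nat | Lo nat

definition points :: "nat \<Rightarrow> nat \<Rightarrow> pt set" where
  "points k l = Up ` {1..k} \<union> Lo ` {1..l}"

definition Part :: "nat \<Rightarrow> nat \<Rightarrow> pt set set set" where
  "Part k l = {p. partition_on (points k l) p}"

fun shift_pt :: "nat \<Rightarrow> nat \<Rightarrow> pt \<Rightarrow> pt" where
  "shift_pt k l (Up i) = Up (i + k)"
| "shift_pt k l (Lo j) = Lo (j + l)"

definition tensor :: "nat \<Rightarrow> nat \<Rightarrow> pt set set \<Rightarrow> pt set set \<Rightarrow> pt set set" where
  "tensor k l p q = p \<union> (\<lambda>B. shift_pt k l ` B) ` q"

fun flip_pt :: "pt \<Rightarrow> pt" where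
  "flip_pt (Up i) = Lo i"
| "flip_pt (Lo j) = Up j"

definition star :: "pt set set \<Rightarrow> pt set set" where
  "star p = (\<lambda>B. flip_pt ` B) ` p"

text \<open>Composition: points on three levels (top, middle, bottom).\<close>
datatype tpt = TU nat | TM nat | TL nat

fun top_emb :: "pt \<Rightarrow> tpt" where
  "top_emb (Up i) = TU i"
| "top_emb (Lo j) = TM j"

fun bot_emb :: "pt \<Rightarrow> tpt" where
  "bot_emb (Up j) = TM j"
| "bot_emb (Lo i) = TL i"

definition glued_blocks :: "pt set set \<Rightarrow> pt set set \<Rightarrow> tpt set set" where
  "glued_blocks p q = (\<lambda>B. top_emb ` B) ` q \<union> (\<lambda>B. bot_emb ` B) ` p"

definition connected_rel :: "tpt set set \<Rightarrow> (tpt \<times> tpt) set" where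
  "connected_rel bl = {(x, y). \<exists>B\<in>bl. x \<in> B \<and> y \<in> B}"

definition outer_part :: "tpt set \<Rightarrow> pt set" where
  "outer_part C = {Up i | i. TU i \<in> C} \<union> {Lo i | i. TL i \<in> C}"

text \<open>comp p q = pq for p in P(m,l), q in P(k,m): merge blocks connected through the
  middle points, delete middle points and blocks consisting only of middle points.\<close>
definition comp :: "pt set set \<Rightarrow> pt set set \<Rightarrow> pt set set" where
  "comp p q =
     (let bl = glued_blocks p q;
          R = connected_rel bl;
          classes = (\<lambda>x. R\<^sup>* `` {x}) ` (\<Union>bl)
      in outer_part ` classes - {{}})"

definition id_part :: "pt set set" where
  "id_part = {{Up 1, Lo 1}}"

definition cap_part :: "pt set set" where
  "cap_part = {{Lo 1, Lo 2}}"

definition full_category_of_partitions :: "(nat \<Rightarrow> nat \<Rightarrow> pt set set set) \<Rightarrow> bool" where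
  "full_category_of_partitions Px \<longleftrightarrow>
     (\<forall>k l. Px k l \<subseteq> Part k l) \<and>
     (\<forall>k l k' l' p q. p \<in> Px k l \<longrightarrow> q \<in> Px k' l' \<longrightarrow> tensor k l p q \<in> Px (k + k') (l + l')) \<and>
     (\<forall>k l m p q. p \<in> Px m l \<longrightarrow> q \<in> Px k m \<longrightarrow> comp p q \<in> Px k l) \<and>
     (\<forall>k l p. p \<in> Px k l \<longrightarrow> star p \<in> Px l k) \<and>
     id_part \<in> Px 1 1 \<and> cap_part \<in> Px 0 2"

text \<open>Cyclic order: upper 1..k, then lower l..1.\<close>
fun pos :: "nat \<Rightarrow> nat \<Rightarrow> pt \<Rightarrow> nat" where
  "pos k l (Up i) = i"
| "pos k l (Lo j) = k + (l + 1 - j)"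

definition crosses :: "nat \<Rightarrow> nat \<Rightarrow> pt set \<Rightarrow> pt set \<Rightarrow> bool" where
  "crosses k l B C \<longleftrightarrow> (\<exists>a b c d. B = {a, b} \<and> C = {c, d} \<and>
      pos k l a < pos k l b \<and> pos k l c < pos k l d \<and>
      ((pos k l a < pos k l c \<and> pos k l c < pos k l b \<and> pos k l b < pos k l d) \<or>
       (pos k l c < pos k l a \<and> pos k l a < pos k l d \<and> pos k l d < pos k l b)))"

definition is_pairing :: "pt set set \<Rightarrow> bool" where
  "is_pairing p \<longleftrightarrow> (\<forall>B\<in>p. card B = 2)"

definition Po_star :: "nat \<Rightarrow> nat \<Rightarrow> pt set set set" where
  "Po_star k l = {p \<in> Part k l. is_pairing p \<and>
      (\<forall>B\<in>p. even (card {C \<in> p. C \<noteq> B \<and> crosses k l B C}))}"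

end

theory Submission
  imports Defs "HOL-Combinatorics.Orbits"
begin

text \<open>For a block {a, b} of a pairing, every other block meets the points strictly between a and
  b in one point if it crosses {a, b} and in zero or two points otherwise. Hence {a, b} crosses an
  even number of blocks iff the positions of a and b in the cyclic order have opposite parity, and
  P_o^* consists of the pairings whose blocks all join points of opposite position parity.

  This condition survives the tensor product, since a pairing has an even number of points, and
  the involution, which reverses the cyclic order. For a composition pq, colour the points of the
  glued diagram by position parity, normalised so that every block of p and of q joins points of
  different colours. A block of pq is the pair of ends of a path alternating between blocks of q
  and blocks of p; the colour changes at each step, and the path has odd length exactly when its
  two ends lie in the same outer row, which gives opposite position parities at the ends.\<close>

section \<open>Crossings and position parity\<close>

lemma Up_in_points [simp]: "Up i \<in> points k l \<longleftrightarrow> 1 \<le> i \<and> i \<le> k"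
  by (auto simp: points_def)

lemma Lo_in_points [simp]: "Lo j \<in> points k l \<longleftrightarrow> 1 \<le> j \<and> j \<le> l"
  by (auto simp: points_def)

lemma finite_points [simp]: "finite (points k l)"
  by (simp add: points_def)

lemma card_points: "card (points k l) = k + l"
  unfolding points_def by (subst card_Un_disjoint) (auto simp: card_image inj_on_def)

lemma inj_on_pos: "inj_on (pos k l) (points k l)"
proof (rule inj_onI)
  fix x y assume "x \<in> points k l" "y \<in> points k l" "pos k l x = pos k l y"
  then show "x = y" by (cases x; cases y) auto
qed

lemma pos_image_points: "pos k l ` points k l = {1..k + l}"
proof
  show "pos k l ` points k l \<subseteq> {1..k + l}"
    by (auto simp: points_def)
  show "{1..k + l} \<subseteq> pos k l ` points k l"
  proof
    fix n assume n: "n \<in> {1..k + l}"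
    show "n \<in> pos k l ` points k l"
    proof (cases "n \<le> k")
      case True
      with n show ?thesis by (intro image_eqI[of _ _ "Up n"]) auto
    next
      case False
      with n show ?thesis by (intro image_eqI[of _ _ "Lo (k + l + 1 - n)"]) auto
    qed
  qed
qed

lemma interleaved_iff_separates:
  fixes x y u v :: nat
  assumes "x < y" "u \<notin> {x, y}" "v \<notin> {x, y}"
  shows "(x < u \<and> u < y \<and> y < v \<or> u < x \<and> x < v \<and> v < y \<or>
          x < v \<and> v < y \<and> y < u \<or> v < x \<and> x < u \<and> u < y) \<longleftrightarrow>
         (x < u \<and> u < y) \<noteq> (x < v \<and> v < y)"
  using assms by auto

lemma crosses_iff_separates:
  assumes ab: "pos k l a < pos k l b"
    and c: "pos k l c \<notin> {pos k l a, pos k l b}" and d: "pos k l d \<notin> {pos k l a, pos k l b}"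
  shows "crosses k l {a, b} {c, d} \<longleftrightarrow>
    (pos k l a < pos k l c \<and> pos k l c < pos k l b) \<noteq>
    (pos k l a < pos k l d \<and> pos k l d < pos k l b)"
proof -
  let ?a = "pos k l a" and ?b = "pos k l b" and ?c = "pos k l c" and ?d = "pos k l d"
  have "crosses k l {a, b} {c, d} \<longleftrightarrow>
      (?a < ?c \<and> ?c < ?b \<and> ?b < ?d \<or> ?c < ?a \<and> ?a < ?d \<and> ?d < ?b \<or>
       ?a < ?d \<and> ?d < ?b \<and> ?b < ?c \<or> ?d < ?a \<and> ?a < ?c \<and> ?c < ?b)"
  proof
    assume "crosses k l {a, b} {c, d}"
    then obtain a' b' c' d' where blocks: "{a, b} = {a', b'}" "{c, d} = {c', d'}"
      and order: "pos k l a' < pos k l b'" "pos k l c' < pos k l d'"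
      and interleaved:
        "pos k l a' < pos k l c' \<and> pos k l c' < pos k l b' \<and> pos k l b' < pos k l d' \<or>
         pos k l c' < pos k l a' \<and> pos k l a' < pos k l d' \<and> pos k l d' < pos k l b'"
      unfolding crosses_def by blast
    have "a' = a" "b' = b" using blocks(1) order(1) ab by (auto simp: doubleton_eq_iff)
    moreover have "c' = c \<and> d' = d \<or> c' = d \<and> d' = c"
      using blocks(2) by (auto simp: doubleton_eq_iff)
    ultimately show "?a < ?c \<and> ?c < ?b \<and> ?b < ?d \<or> ?c < ?a \<and> ?a < ?d \<and> ?d < ?b \<or>
       ?a < ?d \<and> ?d < ?b \<and> ?b < ?c \<or> ?d < ?a \<and> ?a < ?c \<and> ?c < ?b"
      using interleaved by (elim disjE conjE; hypsubst; blast)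
  next
    assume "?a < ?c \<and> ?c < ?b \<and> ?b < ?d \<or> ?c < ?a \<and> ?a < ?d \<and> ?d < ?b \<or>
       ?a < ?d \<and> ?d < ?b \<and> ?b < ?c \<or> ?d < ?a \<and> ?a < ?c \<and> ?c < ?b"
    then show "crosses k l {a, b} {c, d}"
    proof (elim disjE)
      assume "?a < ?c \<and> ?c < ?b \<and> ?b < ?d"
      with ab show ?thesis unfolding crosses_def
        by (intro exI[of _ a] exI[of _ b] exI[of _ c] exI[of _ d]) auto
    next
      assume "?c < ?a \<and> ?a < ?d \<and> ?d < ?b"
      with ab show ?thesis unfolding crosses_def
        by (intro exI[of _ a] exI[of _ b] exI[of _ c] exI[of _ d]) auto
    next
      assume "?a < ?d \<and> ?d < ?b \<and> ?b < ?c"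
      with ab show ?thesis unfolding crosses_def
        by (intro exI[of _ a] exI[of _ b] exI[of _ d] exI[of _ c]) (auto simp: insert_commute)
    next
      assume "?d < ?a \<and> ?a < ?c \<and> ?c < ?b"
      with ab show ?thesis unfolding crosses_def
        by (intro exI[of _ a] exI[of _ b] exI[of _ d] exI[of _ c]) (auto simp: insert_commute)
    qed
  qed
  also have "\<dots> \<longleftrightarrow> (?a < ?c \<and> ?c < ?b) \<noteq> (?a < ?d \<and> ?d < ?b)"
    by (rule interleaved_iff_separates[OF ab c d])
  finally show ?thesis .
qed

definition points_between :: "nat \<Rightarrow> nat \<Rightarrow> pt \<Rightarrow> pt \<Rightarrow> pt set" where
  "points_between k l a b = {z \<in> points k l. pos k l a < pos k l z \<and> pos k l z < pos k l b}"

lemma card_points_between: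
  assumes "a \<in> points k l" "b \<in> points k l" "pos k l a < pos k l b"
  shows "card (points_between k l a b) = pos k l b - pos k l a - 1"
proof -
  have "pos k l a \<in> {1..k + l}" "pos k l b \<in> {1..k + l}"
    using pos_image_points assms(1,2) by blast+
  moreover have "pos k l ` points_between k l a b = pos k l ` points k l \<inter> {pos k l a<..<pos k l b}"
    unfolding points_between_def by auto
  ultimately have "pos k l ` points_between k l a b = {pos k l a<..<pos k l b}"
    by (auto simp: pos_image_points)
  moreover have "inj_on (pos k l) (points_between k l a b)"
    using inj_on_pos by (rule inj_on_subset) (auto simp: points_between_def)
  ultimately have "card (points_between k l a b) = card {pos k l a<..<pos k l b}"
    by (simp add: card_image[symmetric])
  then show ?thesis by simp
qed

lemma crosses_iff_odd_card_between:
  assumes ab: "a \<in> points k l" "b \<in> points k l" "pos k l a < pos k l b"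
    and cd: "c \<in> points k l" "d \<in> points k l" "c \<noteq> d" "{c, d} \<inter> {a, b} = {}"
  shows "crosses k l {a, b} {c, d} \<longleftrightarrow> odd (card ({c, d} \<inter> points_between k l a b))"
proof -
  let ?between = "\<lambda>z. pos k l a < pos k l z \<and> pos k l z < pos k l b"
  have "pos k l c \<notin> {pos k l a, pos k l b}" "pos k l d \<notin> {pos k l a, pos k l b}"
    using ab cd by (auto simp: inj_on_eq_iff[OF inj_on_pos])
  then have "crosses k l {a, b} {c, d} \<longleftrightarrow> ?between c \<noteq> ?between d"
    by (rule crosses_iff_separates[OF ab(3)])
  moreover have "{c, d} \<inter> points_between k l a b =
      (if ?between c then {c} else {}) \<union> (if ?between d then {d} else {})"
    using cd unfolding points_between_def by auto
  ultimately show ?thesis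
    using cd(3) by (simp split: if_splits)
qed

lemma even_crossings_iff:
  assumes part: "p \<in> Part k l" and pairing: "is_pairing p"
    and B: "{a, b} \<in> p" and ab: "pos k l a < pos k l b"
  shows "even (card {C \<in> p. C \<noteq> {a, b} \<and> crosses k l {a, b} C}) \<longleftrightarrow> odd (pos k l a + pos k l b)"
proof -
  let ?B = "{a, b}" and ?I = "points_between k l a b"
  have partition: "partition_on (points k l) p" using part by (simp add: Part_def)
  have finite_p: "finite p" using finite_elements[OF finite_points partition] .
  have disj: "disjoint p" and covers: "\<Union>p = points k l"
    using partition by (auto simp: partition_on_def)
  have ab_points: "a \<in> points k l" "b \<in> points k l" using B covers by auto
  have "?I = (\<Union>C\<in>p - {?B}. C \<inter> ?I)"
    using covers ab unfolding points_between_def by auto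
  moreover have "card (\<Union>C\<in>p - {?B}. C \<inter> ?I) = (\<Sum>C\<in>p - {?B}. card (C \<inter> ?I))"
    by (rule card_UN_disjoint)
      (use finite_p disj in \<open>auto simp: points_between_def pairwise_def disjnt_def\<close>)
  ultimately have parity_I: "even (card ?I) \<longleftrightarrow> even (card {C \<in> p - {?B}. odd (card (C \<inter> ?I))})"
    using finite_p by (simp add: even_sum_iff)
  have crossing_iff: "odd (card (C \<inter> ?I)) \<longleftrightarrow> crosses k l ?B C" if C: "C \<in> p - {?B}" for C
  proof -
    obtain c d where cd: "C = {c, d}" "c \<noteq> d"
      using C pairing card_2_iff unfolding is_pairing_def by (metis DiffD1)
    moreover have "C \<inter> ?B = {}" using disjointD[OF disj, of C ?B] C B by blast
    moreover have "c \<in> points k l" "d \<in> points k l" using C cd covers by auto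
    ultimately show ?thesis using crosses_iff_odd_card_between[OF ab_points ab] by simp
  qed
  have "{C \<in> p - {?B}. odd (card (C \<inter> ?I))} = {C \<in> p. C \<noteq> ?B \<and> crosses k l ?B C}"
  proof (rule Collect_cong)
    fix C
    show "C \<in> p - {?B} \<and> odd (card (C \<inter> ?I)) \<longleftrightarrow> C \<in> p \<and> C \<noteq> ?B \<and> crosses k l ?B C"
      using crossing_iff[of C] by auto
  qed
  moreover have "even (card ?I) \<longleftrightarrow> odd (pos k l a + pos k l b)"
    using card_points_between[OF ab_points ab] ab by presburger
  ultimately show ?thesis using parity_I by simp
qed

definition parity_alternating :: "nat \<Rightarrow> nat \<Rightarrow> pt set set \<Rightarrow> bool" where
  "parity_alternating k l p \<longleftrightarrow> (\<forall>B\<in>p. \<forall>a\<in>B. \<forall>b\<in>B. a \<noteq> b \<longrightarrow> odd (pos k l a + pos k l b))"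

lemma even_crossings_iff_alternating_block:
  assumes part: "p \<in> Part k l" and pairing: "is_pairing p" and B: "B \<in> p"
  shows "even (card {C \<in> p. C \<noteq> B \<and> crosses k l B C}) \<longleftrightarrow>
    (\<forall>a\<in>B. \<forall>b\<in>B. a \<noteq> b \<longrightarrow> odd (pos k l a + pos k l b))"
proof -
  obtain a b where ab: "B = {a, b}" "a \<noteq> b"
    using B pairing card_2_iff unfolding is_pairing_def by metis
  have "a \<in> points k l" "b \<in> points k l"
    using part B ab by (auto simp: Part_def partition_on_def)
  then have order: "pos k l a < pos k l b \<or> pos k l b < pos k l a"
    using ab by (simp add: inj_on_eq_iff[OF inj_on_pos] linorder_neq_iff[symmetric])
  have alternating_iff:
    "(\<forall>x\<in>B. \<forall>y\<in>B. x \<noteq> y \<longrightarrow> odd (pos k l x + pos k l y)) \<longleftrightarrow> odd (pos k l a + pos k l b)"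
    using ab by (auto simp: add.commute)
  from order show ?thesis
  proof (elim disjE)
    assume "pos k l a < pos k l b"
    then show ?thesis
      using even_crossings_iff[OF part pairing B[unfolded ab(1)]] alternating_iff ab(1) by simp
  next
    assume "pos k l b < pos k l a"
    moreover have "{b, a} \<in> p" "{b, a} = B" using B ab(1) by (simp_all add: insert_commute)
    ultimately show ?thesis using even_crossings_iff[OF part pairing, of b a] alternating_iff
      by (simp add: add.commute)
  qed
qed

lemma Po_star_iff:
  "p \<in> Po_star k l \<longleftrightarrow> p \<in> Part k l \<and> is_pairing p \<and> parity_alternating k l p"
proof -
  have "(\<forall>B\<in>p. even (card {C \<in> p. C \<noteq> B \<and> crosses k l B C})) \<longleftrightarrow> parity_alternating k l p"
    if "p \<in> Part k l" "is_pairing p"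
    unfolding parity_alternating_def
    using even_crossings_iff_alternating_block[OF that] by (rule ball_cong[OF refl])
  then show ?thesis unfolding Po_star_def by blast
qed

section \<open>Tensor product, involution and generators\<close>

lemma partition_on_image_inj:
  assumes "partition_on A P" "inj h"
  shows "partition_on (h ` A) ((`) h ` P)"
proof -
  have "partition_on (h ` A) ((`) h ` P - {{}})"
    using partition_on_inj_image[OF assms(1)] assms(2) inj_on_subset by blast
  moreover have "(`) h ` P - {{}} = (`) h ` P"
    using partition_onD3[OF assms(1)] by auto
  ultimately show ?thesis by simp
qed

lemma is_pairing_image: "inj h \<Longrightarrow> is_pairing p \<Longrightarrow> is_pairing ((`) h ` p)"
  unfolding is_pairing_def by (auto simp: card_image inj_on_subset)

lemma parity_alternating_image:
  assumes "parity_alternating k l p" "p \<in> Part k l"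
    and parity: "\<And>a b. a \<in> points k l \<Longrightarrow> b \<in> points k l \<Longrightarrow>
      odd (pos k' l' (h a) + pos k' l' (h b)) \<longleftrightarrow> odd (pos k l a + pos k l b)"
  shows "parity_alternating k' l' ((`) h ` p)"
  unfolding parity_alternating_def
proof (intro ballI impI)
  fix B' a' b' assume "B' \<in> (`) h ` p" "a' \<in> B'" "b' \<in> B'" "a' \<noteq> b'"
  then obtain B a b where B: "B \<in> p" "a \<in> B" "b \<in> B" "a \<noteq> b" and ab': "a' = h a" "b' = h b"
    by blast
  then have "a \<in> points k l" "b \<in> points k l"
    using \<open>p \<in> Part k l\<close> by (auto simp: Part_def partition_on_def)
  moreover have "odd (pos k l a + pos k l b)"
    using assms(1) B unfolding parity_alternating_def by blast
  ultimately show "odd (pos k' l' a' + pos k' l' b')"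
    using parity ab' by fastforce
qed

lemma parity_alternating_Un:
  "parity_alternating k l (p \<union> q) \<longleftrightarrow> parity_alternating k l p \<and> parity_alternating k l q"
  unfolding parity_alternating_def by blast

lemma even_points_if_pairing:
  assumes "p \<in> Part k l" "is_pairing p"
  shows "even (k + l)"
proof -
  have partition: "partition_on (points k l) p" using assms(1) by (simp add: Part_def)
  have "card (points k l) = sum card p"
    unfolding partition_onD1[OF partition]
  proof (rule card_Union_disjoint)
    show "disjoint p" using partition_onD2[OF partition] .
    show "finite B" if "B \<in> p" for B
      using that partition_onD1[OF partition] finite_points[of k l]
      by (metis Union_upper finite_subset)
  qed
  also have "\<dots> = 2 * card p"
    using assms(2) by (simp add: is_pairing_def)
  finally show ?thesis by (simp add: card_points)
qed

lemma inj_shift_pt: "inj (shift_pt k l)"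
proof (rule injI)
  fix x y show "shift_pt k l x = shift_pt k l y \<Longrightarrow> x = y" by (cases x; cases y) auto
qed

lemma shift_pt_points: "shift_pt k l ` points k' l' = points (k + k') (l + l') - points k l"
proof (intro equalityI subsetI)
  fix z assume "z \<in> shift_pt k l ` points k' l'"
  then obtain a where "a \<in> points k' l'" "z = shift_pt k l a" by blast
  then show "z \<in> points (k + k') (l + l') - points k l" by (cases a) auto
next
  fix z assume z: "z \<in> points (k + k') (l + l') - points k l"
  show "z \<in> shift_pt k l ` points k' l'"
  proof (cases z)
    case (Up i) with z show ?thesis by (intro image_eqI[of _ _ "Up (i - k)"]) auto
  next
    case (Lo j) with z show ?thesis by (intro image_eqI[of _ _ "Lo (j - l)"]) auto
  qed
qed

lemma pos_shift_pt: "a \<in> points k' l' \<Longrightarrow> pos (k + k') (l + l') (shift_pt k l a) = pos k' l' a + k"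
  by (cases a) auto

lemma points_subset_tensor: "points k l \<subseteq> points (k + k') (l + l')"
  by (auto simp: points_def)

lemma Part_tensor:
  assumes "p \<in> Part k l" "q \<in> Part k' l'"
  shows "tensor k l p q \<in> Part (k + k') (l + l')"
proof -
  let ?Q = "(`) (shift_pt k l) ` q"
  have p: "partition_on (points k l) p" using assms(1) by (simp add: Part_def)
  have Q: "partition_on (shift_pt k l ` points k' l') ?Q"
    using assms(2) by (simp add: Part_def partition_on_image_inj inj_shift_pt)
  have "partition_on (points k l \<union> shift_pt k l ` points k' l') (p \<union> ?Q)"
    unfolding partition_on_def
  proof (intro conjI)
    show "\<Union>(p \<union> ?Q) = points k l \<union> shift_pt k l ` points k' l'"
      using partition_onD1[OF p] partition_onD1[OF Q] by auto
    show "disjoint (p \<union> ?Q)"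
      using partition_onD1[OF p] partition_onD1[OF Q] partition_onD2[OF p] partition_onD2[OF Q]
      by (intro disjoint_union) (auto simp: shift_pt_points)
    show "{} \<notin> p \<union> ?Q"
      using partition_onD3[OF p] partition_onD3[OF Q] by blast
  qed
  moreover have "points k l \<union> shift_pt k l ` points k' l' = points (k + k') (l + l')"
    using points_subset_tensor[of k l k' l'] by (auto simp: shift_pt_points)
  ultimately show ?thesis by (simp add: Part_def tensor_def)
qed

lemma Po_star_tensor:
  assumes p: "p \<in> Po_star k l" and q: "q \<in> Po_star k' l'"
  shows "tensor k l p q \<in> Po_star (k + k') (l + l')"
proof -
  have p': "p \<in> Part k l" "is_pairing p" "parity_alternating k l p" and
    q': "q \<in> Part k' l'" "is_pairing q" "parity_alternating k' l' q"
    using p q by (simp_all add: Po_star_iff)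
  have "even (k' + l')" using q' even_points_if_pairing by blast
  then have shift_even: "even (pos (k + k') (l + l') a + pos k l a)" if "a \<in> points k l" for a
    using that by (cases a) auto
  have "parity_alternating (k + k') (l + l') ((`) id ` p)"
  proof (rule parity_alternating_image[OF p'(3,1)])
    fix a b assume "a \<in> points k l" "b \<in> points k l"
    with shift_even[of a] shift_even[of b]
    show "odd (pos (k + k') (l + l') (id a) + pos (k + k') (l + l') (id b)) \<longleftrightarrow>
        odd (pos k l a + pos k l b)"
      by simp
  qed
  moreover have "parity_alternating (k + k') (l + l') ((`) (shift_pt k l) ` q)"
    by (rule parity_alternating_image[OF q'(3,1)]) (simp add: pos_shift_pt, presburger)
  moreover have "is_pairing (tensor k l p q)"
    using p'(2) is_pairing_image[OF inj_shift_pt q'(2)]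
    by (auto simp: tensor_def is_pairing_def)
  ultimately show ?thesis
    using Part_tensor[OF p'(1) q'(1)] by (simp add: Po_star_iff tensor_def parity_alternating_Un)
qed

lemma inj_flip_pt: "inj flip_pt"
proof (rule injI)
  fix x y show "flip_pt x = flip_pt y \<Longrightarrow> x = y" by (cases x; cases y) auto
qed

lemma flip_pt_points: "flip_pt ` points k l = points l k"
proof (intro equalityI subsetI)
  fix z assume "z \<in> flip_pt ` points k l"
  then obtain a where "a \<in> points k l" "z = flip_pt a" by blast
  then show "z \<in> points l k" by (cases a) auto
next
  fix z assume "z \<in> points l k"
  then show "z \<in> flip_pt ` points k l"
    by (cases z) (auto intro: image_eqI[of _ _ "Lo _"] image_eqI[of _ _ "Up _"])
qed

lemma pos_flip_pt: "a \<in> points k l \<Longrightarrow> pos l k (flip_pt a) + pos k l a = k + l + 1"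
  by (cases a) auto

lemma Po_star_star:
  assumes "p \<in> Po_star k l"
  shows "star p \<in> Po_star l k"
proof -
  have p: "p \<in> Part k l" "is_pairing p" "parity_alternating k l p"
    using assms by (simp_all add: Po_star_iff)
  have "star p \<in> Part l k"
    using partition_on_image_inj[OF _ inj_flip_pt, of "points k l" p] p(1)
    by (simp add: Part_def star_def flip_pt_points)
  moreover have "parity_alternating l k (star p)"
    unfolding star_def
  proof (rule parity_alternating_image[OF p(3,1)])
    fix a b assume "a \<in> points k l" "b \<in> points k l"
    from pos_flip_pt[OF this(1)] pos_flip_pt[OF this(2)]
    show "odd (pos l k (flip_pt a) + pos l k (flip_pt b)) \<longleftrightarrow> odd (pos k l a + pos k l b)"
      by presburger
  qed
  ultimately show ?thesis
    using is_pairing_image[OF inj_flip_pt p(2)] by (simp add: Po_star_iff star_def)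
qed

lemma id_part_in_Po_star: "id_part \<in> Po_star 1 1"
  by (auto simp: Po_star_iff Part_def id_part_def is_pairing_def parity_alternating_def
      partition_on_def points_def)

lemma cap_part_in_Po_star: "cap_part \<in> Po_star 0 2"
  by (auto simp: Po_star_iff Part_def cap_part_def is_pairing_def parity_alternating_def
      partition_on_def points_def)

section \<open>Paths traced by two involutions\<close>

definition partner :: "'a set set \<Rightarrow> 'a \<Rightarrow> 'a" where
  "partner bs v = (if \<exists>B\<in>bs. v \<in> B then (SOME w. \<exists>B\<in>bs. v \<in> B \<and> w \<in> B \<and> w \<noteq> v) else v)"

lemma partner_in_block:
  assumes "disjoint bs" and "\<And>B. B \<in> bs \<Longrightarrow> card B = 2" and "B \<in> bs" "v \<in> B"
  shows "B = {v, partner bs v} \<and> partner bs v \<noteq> v"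
proof -
  obtain w where w: "B = {v, w}" "w \<noteq> v"
    using assms(2)[OF assms(3)] assms(4) by (auto simp: card_2_iff doubleton_eq_iff)
  then have ex: "\<exists>w. \<exists>B\<in>bs. v \<in> B \<and> w \<in> B \<and> w \<noteq> v" using assms(3) by blast
  have "partner bs v = (SOME w. \<exists>B\<in>bs. v \<in> B \<and> w \<in> B \<and> w \<noteq> v)"
    using assms(3,4) by (auto simp: partner_def)
  then have "\<exists>B'\<in>bs. v \<in> B' \<and> partner bs v \<in> B' \<and> partner bs v \<noteq> v"
    using someI_ex[OF ex] by simp
  then obtain B' where B': "B' \<in> bs" "v \<in> B'" "partner bs v \<in> B'" "partner bs v \<noteq> v"
    by blast
  have "B' = B" using disjointD[OF assms(1) B'(1) assms(3)] B'(2) assms(4) by blast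
  then show ?thesis using B' w by auto
qed

lemma partner_outside: "v \<notin> \<Union>bs \<Longrightarrow> partner bs v = v"
  unfolding partner_def by auto

lemma partner_partner:
  assumes "disjoint bs" and "\<And>B. B \<in> bs \<Longrightarrow> card B = 2"
  shows "partner bs (partner bs v) = v"
proof (cases "v \<in> \<Union>bs")
  case True
  then obtain B where B: "B \<in> bs" "v \<in> B" by blast
  with partner_in_block[OF assms] have "B = {v, partner bs v}" "partner bs v \<noteq> v" by auto
  moreover from this partner_in_block[OF assms B(1), of "partner bs v"]
  have "B = {partner bs v, partner bs (partner bs v)}" "partner bs (partner bs v) \<noteq> partner bs v"
    by auto
  ultimately show ?thesis by (auto simp: doubleton_eq_iff)
qed (simp add: partner_outside)

lemma same_block_iff_partner:
  assumes "disjoint bs" and "\<And>B. B \<in> bs \<Longrightarrow> card B = 2"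
  shows "(\<exists>B\<in>bs. v \<in> B \<and> w \<in> B) \<longleftrightarrow> v \<in> \<Union>bs \<and> (w = v \<or> w = partner bs v)"
  using partner_in_block[OF assms] by blast

locale involution_pair =
  fixes D :: "'a set" and f g :: "'a \<Rightarrow> 'a"
  assumes finite_D: "finite D"
    and f_f [simp]: "f (f v) = v" and g_g [simp]: "g (g v) = v"
    and f_in_D: "v \<in> D \<Longrightarrow> f v \<in> D" and g_in_D: "v \<in> D \<Longrightarrow> g v \<in> D"
    and no_common_fixpoint: "v \<in> D \<Longrightarrow> f v \<noteq> v \<or> g v \<noteq> v"
begin

abbreviation path_end :: "'a \<Rightarrow> bool" where
  "path_end v \<equiv> f v = v \<or> g v = v"

definition adj :: "('a \<times> 'a) set" where
  "adj = {(v, w). v \<in> D \<and> (w = v \<or> w = f v \<or> w = g v)}"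

lemma rtrancl_adj_in_D: "(v, w) \<in> adj\<^sup>* \<Longrightarrow> v \<in> D \<Longrightarrow> w \<in> D"
  by (induction rule: rtrancl_induct) (auto simp: adj_def f_in_D g_in_D)

lemma sym_adj: "sym adj"
  unfolding sym_def adj_def using f_in_D g_in_D by auto

lemma component_eq: "w \<in> adj\<^sup>* `` {v} \<Longrightarrow> adj\<^sup>* `` {w} = adj\<^sup>* `` {v}"
  using sym_rtrancl[OF sym_adj] by (auto simp: sym_def intro: rtrancl_trans)

lemma involution_pair_swap: "involution_pair D g f"
  using finite_D f_in_D g_in_D no_common_fixpoint by unfold_locales auto

lemma adj_swap: "involution_pair.adj D g f = adj"
  unfolding involution_pair.adj_def[OF involution_pair_swap] adj_def by auto

end

text \<open>Starting at a fixpoint x of g, alternately applying f and g traces the component of x as a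
  path; walk n is the point reached after n rounds, and the orbit of x under g \<circ> f closes up
  after period rounds, when the path has run to its other end and back.\<close>

locale walk_from_fixpoint = involution_pair +
  fixes x assumes x_in_D: "x \<in> D" and g_x: "g x = x"
begin

definition turn :: "'a \<Rightarrow> 'a" where "turn = g \<circ> f"
definition walk :: "nat \<Rightarrow> 'a" where "walk n = (turn ^^ n) x"
definition period :: nat where "period = funpow_dist1 turn x x"

lemma inj_turn: "inj turn"
proof (rule injI)
  fix u v assume "turn u = turn v"
  then have "f (g (turn u)) = f (g (turn v))" by simp
  then show "u = v" by (simp add: turn_def)
qed

lemma walk_0 [simp]: "walk 0 = x"
  by (simp add: walk_def)

lemma walk_Suc: "walk (Suc n) = g (f (walk n))"
  by (simp add: walk_def turn_def)

lemma walk_Suc_turn: "walk (Suc n) = turn (walk n)"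
  by (simp add: walk_def)

lemma turn_power_walk: "(turn ^^ i) (walk j) = walk (i + j)"
  by (simp add: walk_def funpow_add)

lemma walk_in_D: "walk n \<in> D"
  by (induction n) (simp_all add: walk_Suc x_in_D f_in_D g_in_D)

lemma x_in_orbit: "x \<in> orbit turn x"
proof -
  have "finite {y. \<exists>n. y = (turn ^^ n) x}"
    by (rule finite_subset[OF _ finite_D]) (auto simp: walk_in_D walk_def[symmetric])
  then obtain n where "0 < n" "(turn ^^ n) x = x"
    using funpow_inj_finite[OF inj_turn] by blast
  then show ?thesis unfolding orbit_altdef by (intro CollectI exI[of _ n]) simp
qed

lemma walk_period: "walk period = x"
  unfolding walk_def period_def by (rule funpow_dist1_prop[OF x_in_orbit])

lemma period_pos: "0 < period"
  by (simp add: period_def)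

lemma walk_inj_iff: "a < period \<Longrightarrow> b < period \<Longrightarrow> walk a = walk b \<longleftrightarrow> a = b"
  using inj_on_funpow_dist1[OF x_in_orbit] unfolding inj_on_def walk_def period_def by auto

lemma turn_power_g_walk: "(turn ^^ a) (g (walk a)) = x"
proof (induction a)
  case 0
  then show ?case by (simp add: g_x)
next
  case (Suc a)
  have "(turn ^^ Suc a) (g (walk (Suc a))) = (turn ^^ a) (turn (g (turn (walk a))))"
    by (simp only: walk_Suc_turn funpow_Suc_right comp_apply)
  also have "\<dots> = (turn ^^ a) (g (walk a))"
    by (simp add: turn_def)
  finally show ?case using Suc.IH by simp
qed

lemma f_walk: "a < period \<Longrightarrow> f (walk a) = walk (period - 1 - a)"
proof -
  assume a: "a < period"
  have "(turn ^^ Suc a) (f (walk a)) = x"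
    using turn_power_g_walk[of a] by (simp add: funpow_Suc_right turn_def del: funpow.simps)
  moreover have "(turn ^^ Suc a) (walk (period - 1 - a)) = walk (Suc a + (period - 1 - a))"
    by (rule turn_power_walk)
  moreover have "Suc a + (period - 1 - a) = period"
    using a by simp
  ultimately show ?thesis
    using inj_fn[OF inj_turn, of "Suc a"] walk_period by (metis injD)
qed

lemma g_walk: "0 < a \<Longrightarrow> a < period \<Longrightarrow> g (walk a) = walk (period - a)"
proof -
  assume a: "0 < a" "a < period"
  have "g (walk a) = g (f (walk (period - 1 - a)))"
    using f_walk[OF a(2)] by (metis f_f)
  also have "\<dots> = walk (period - a)"
    using a by (simp add: walk_Suc[symmetric] Suc_diff_Suc)
  finally show ?thesis .
qed

lemma f_fixes_walk_iff: "a < period \<Longrightarrow> f (walk a) = walk a \<longleftrightarrow> 2 * a + 1 = period"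
  using f_walk walk_inj_iff[of "period - 1 - a" a] by auto

lemma g_fixes_walk_iff: "a < period \<Longrightarrow> g (walk a) = walk a \<longleftrightarrow> a = 0 \<or> 2 * a = period"
  using g_walk walk_inj_iff[of "period - a" a] by (cases "a = 0") (auto simp: g_x)

lemma component_walk: "adj\<^sup>* `` {x} = walk ` {..<period}"
proof (intro equalityI subsetI)
  fix w assume "w \<in> adj\<^sup>* `` {x}"
  then have "(x, w) \<in> adj\<^sup>*" by simp
  then show "w \<in> walk ` {..<period}"
  proof (induction rule: rtrancl_induct)
    case base
    show ?case using period_pos by (auto intro: image_eqI[of _ _ 0])
  next
    case (step v w)
    then obtain a where a: "a < period" "v = walk a" by blast
    from step.hyps(2) have "w = v \<or> w = f v \<or> w = g v" by (simp add: adj_def)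
    then show ?case
    proof (elim disjE)
      assume "w = f v"
      then show ?thesis using a f_walk by auto
    next
      assume "w = g v"
      then show ?thesis using a g_walk g_x period_pos
        by (cases "a = 0") (auto intro: image_eqI[of _ _ 0])
    qed (use a in auto)
  qed
next
  have "walk a \<in> adj\<^sup>* `` {x}" for a
  proof (induction a)
    case (Suc a)
    have "(walk a, f (walk a)) \<in> adj" "(f (walk a), walk (Suc a)) \<in> adj"
      using walk_in_D f_in_D by (auto simp: adj_def walk_Suc)
    with Suc.IH show ?case by (meson Image_singleton_iff rtrancl_into_rtrancl)
  qed simp
  then show "w \<in> adj\<^sup>* `` {x}" if "w \<in> walk ` {..<period}" for w
    using that by blast
qed

lemma period_ge_2: "2 \<le> period"
proof (rule ccontr)
  assume "\<not> 2 \<le> period"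
  then have "period = 1" using period_pos by simp
  then have "f x = x" using f_fixes_walk_iff[of 0] by simp
  with g_x no_common_fixpoint[OF x_in_D] show False by simp
qed

lemma endpoints_walk:
  "{v \<in> adj\<^sup>* `` {x}. path_end v} = {x, walk (period div 2)}"
proof -
  have "{v \<in> walk ` {..<period}. path_end v} =
      walk ` {a. a < period \<and> (f (walk a) = walk a \<or> g (walk a) = walk a)}"
    by auto
  also have "{a. a < period \<and> (f (walk a) = walk a \<or> g (walk a) = walk a)} =
      {a. a < period \<and> (2 * a + 1 = period \<or> a = 0 \<or> 2 * a = period)}"
    using f_fixes_walk_iff g_fixes_walk_iff by blast
  also have "\<dots> = {0, period div 2}"
    using period_ge_2 by auto
  finally show ?thesis by (simp add: component_walk)
qed

lemma colour_walk:
  fixes \<psi> :: "'a \<Rightarrow> bool"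
  assumes flip_f: "\<And>v. v \<in> D \<Longrightarrow> f v \<noteq> v \<Longrightarrow> \<psi> (f v) \<noteq> \<psi> v"
    and flip_g: "\<And>v. v \<in> D \<Longrightarrow> g v \<noteq> v \<Longrightarrow> \<psi> (g v) \<noteq> \<psi> v"
  shows "2 * b < period \<Longrightarrow> \<psi> (walk b) = \<psi> x"
proof (induction b)
  case (Suc b)
  then have b: "b < period" "2 * b + 1 \<noteq> period" "0 < period - 1 - b"
    "2 * (period - 1 - b) \<noteq> period"
    by auto
  have "f (walk b) \<noteq> walk b" using f_fixes_walk_iff b by simp
  then have "\<psi> (f (walk b)) \<noteq> \<psi> (walk b)" using flip_f walk_in_D by blast
  moreover have "g (f (walk b)) \<noteq> f (walk b)"
    using g_fixes_walk_iff[of "period - 1 - b"] f_walk b by auto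
  then have "\<psi> (g (f (walk b))) \<noteq> \<psi> (f (walk b))" using flip_g walk_in_D f_in_D by blast
  ultimately show ?case
    using Suc by (cases "\<psi> (walk b)"; cases "\<psi> (f (walk b))") (simp_all add: walk_Suc)
qed simp

lemma other_endpoint:
  fixes \<psi> :: "'a \<Rightarrow> bool"
  assumes flip_f: "\<And>v. v \<in> D \<Longrightarrow> f v \<noteq> v \<Longrightarrow> \<psi> (f v) \<noteq> \<psi> v"
    and flip_g: "\<And>v. v \<in> D \<Longrightarrow> g v \<noteq> v \<Longrightarrow> \<psi> (g v) \<noteq> \<psi> v"
  obtains y where "y \<noteq> x" "{v \<in> adj\<^sup>* `` {x}. path_end v} = {x, y}"
    "\<psi> y = \<psi> x \<longleftrightarrow> f y = y"
proof
  let ?h = "period div 2"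
  have h: "0 < ?h" "?h < period" using period_ge_2 by auto
  show "walk ?h \<noteq> x" using walk_inj_iff[of ?h 0] h by simp
  show "{v \<in> adj\<^sup>* `` {x}. path_end v} = {x, walk ?h}" by (rule endpoints_walk)
  show "\<psi> (walk ?h) = \<psi> x \<longleftrightarrow> f (walk ?h) = walk ?h"
  proof (cases "even period")
    case True
    then have "f (walk (?h - 1)) = walk ?h" "f (walk (?h - 1)) \<noteq> walk (?h - 1)"
      using f_walk[of "?h - 1"] f_fixes_walk_iff[of "?h - 1"] h by auto
    then have "\<psi> (walk ?h) \<noteq> \<psi> (walk (?h - 1))"
      using flip_f[OF walk_in_D[of "?h - 1"]] by simp
    moreover have "\<psi> (walk (?h - 1)) = \<psi> x"
      using colour_walk[where \<psi> = \<psi>, OF flip_f flip_g, of "?h - 1"] h by simp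
    ultimately have "\<psi> (walk ?h) \<noteq> \<psi> x" by simp
    moreover have "f (walk ?h) \<noteq> walk ?h" using f_fixes_walk_iff h True by auto
    ultimately show ?thesis by simp
  next
    case False
    then show ?thesis
      using colour_walk[where \<psi> = \<psi>, OF flip_f flip_g, of ?h] f_fixes_walk_iff[of ?h] h by auto
  qed
qed

end

context involution_pair
begin

lemma component_endpoints:
  fixes \<psi> :: "'a \<Rightarrow> bool"
  assumes "x \<in> D" "path_end x"
    and flip_f: "\<And>v. v \<in> D \<Longrightarrow> f v \<noteq> v \<Longrightarrow> \<psi> (f v) \<noteq> \<psi> v"
    and flip_g: "\<And>v. v \<in> D \<Longrightarrow> g v \<noteq> v \<Longrightarrow> \<psi> (g v) \<noteq> \<psi> v"
  obtains y where "y \<noteq> x" "{v \<in> adj\<^sup>* `` {x}. path_end v} = {x, y}"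
    "\<psi> y = \<psi> x \<longleftrightarrow> (f y = y \<longleftrightarrow> g x = x)"
proof (cases "g x = x")
  case True
  interpret walk_from_fixpoint D f g x
    using \<open>x \<in> D\<close> True by unfold_locales
  obtain y where y: "y \<noteq> x" "{v \<in> adj\<^sup>* `` {x}. path_end v} = {x, y}"
    "\<psi> y = \<psi> x \<longleftrightarrow> f y = y"
    using other_endpoint[where \<psi> = \<psi>, OF flip_f flip_g] by blast
  with True show ?thesis using that by simp
next
  case False
  then have "f x = x" using assms(2) by simp
  interpret swapped: walk_from_fixpoint D g f x
    using involution_pair_swap \<open>x \<in> D\<close> \<open>f x = x\<close>
    by (simp add: walk_from_fixpoint_def walk_from_fixpoint_axioms_def)
  obtain y where y: "y \<noteq> x" "{v \<in> adj\<^sup>* `` {x}. g v = v \<or> f v = v} = {x, y}"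
    "\<psi> y = \<psi> x \<longleftrightarrow> g y = y"
    using swapped.other_endpoint[where \<psi> = \<psi>, OF flip_g flip_f, unfolded adj_swap] by blast
  have "y \<in> D" using y(2) rtrancl_adj_in_D \<open>x \<in> D\<close> by blast
  then have "g y = y \<longleftrightarrow> \<not> f y = y" using y(2) no_common_fixpoint by blast
  show ?thesis
  proof (rule that)
    show "y \<noteq> x" by (rule y(1))
    show "{v \<in> adj\<^sup>* `` {x}. path_end v} = {x, y}"
      using y(2) by (simp only: disj_commute)
    show "\<psi> y = \<psi> x \<longleftrightarrow> (f y = y \<longleftrightarrow> g x = x)"
      using y(3) \<open>g y = y \<longleftrightarrow> \<not> f y = y\<close> False by simp
  qed
qed

end

section \<open>Composition\<close>

lemma inj_top_emb: "inj top_emb"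
proof (rule injI)
  fix x y show "top_emb x = top_emb y \<Longrightarrow> x = y" by (cases x; cases y) auto
qed

lemma inj_bot_emb: "inj bot_emb"
proof (rule injI)
  fix x y show "bot_emb x = bot_emb y \<Longrightarrow> x = y" by (cases x; cases y) auto
qed

lemma mem_top_emb_image:
  "v \<in> top_emb ` A \<longleftrightarrow> (case v of TU i \<Rightarrow> Up i \<in> A | TM j \<Rightarrow> Lo j \<in> A | TL i \<Rightarrow> False)"
proof
  assume "v \<in> top_emb ` A"
  then obtain z where "z \<in> A" "v = top_emb z" by blast
  then show "case v of TU i \<Rightarrow> Up i \<in> A | TM j \<Rightarrow> Lo j \<in> A | TL i \<Rightarrow> False" by (cases z) auto
next
  assume "case v of TU i \<Rightarrow> Up i \<in> A | TM j \<Rightarrow> Lo j \<in> A | TL i \<Rightarrow> False"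
  then show "v \<in> top_emb ` A"
    by (cases v) (auto intro: image_eqI[of _ _ "Up _"] image_eqI[of _ _ "Lo _"])
qed

lemma mem_bot_emb_image:
  "v \<in> bot_emb ` A \<longleftrightarrow> (case v of TU i \<Rightarrow> False | TM j \<Rightarrow> Up j \<in> A | TL i \<Rightarrow> Lo i \<in> A)"
proof
  assume "v \<in> bot_emb ` A"
  then obtain z where "z \<in> A" "v = bot_emb z" by blast
  then show "case v of TU i \<Rightarrow> False | TM j \<Rightarrow> Up j \<in> A | TL i \<Rightarrow> Lo i \<in> A" by (cases z) auto
next
  assume "case v of TU i \<Rightarrow> False | TM j \<Rightarrow> Up j \<in> A | TL i \<Rightarrow> Lo i \<in> A"
  then show "v \<in> bot_emb ` A"
    by (cases v) (auto intro: image_eqI[of _ _ "Up _"] image_eqI[of _ _ "Lo _"])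
qed

(* The value at middle points is junk; outer_pt is only applied to upper and lower points. *)
definition outer_pt :: "tpt \<Rightarrow> pt" where
  "outer_pt v = (case v of TU i \<Rightarrow> Up i | TM j \<Rightarrow> Up 0 | TL i \<Rightarrow> Lo i)"

locale composable =
  fixes k m l :: nat and p q :: "pt set set"
  assumes p: "p \<in> Po_star m l" and q: "q \<in> Po_star k m"
begin

definition q_blocks :: "tpt set set" where "q_blocks = (\<lambda>B. top_emb ` B) ` q"
definition p_blocks :: "tpt set set" where "p_blocks = (\<lambda>B. bot_emb ` B) ` p"
definition glued_points :: "tpt set" where "glued_points = \<Union>(glued_blocks p q)"
definition q_partner :: "tpt \<Rightarrow> tpt" where "q_partner = partner q_blocks"
definition p_partner :: "tpt \<Rightarrow> tpt" where "p_partner = partner p_blocks"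

text \<open>Position parity in q's cyclic order on the upper and middle rows; on the lower row,
  position parity in p's cyclic order, corrected so that the two agree on the middle row.\<close>

definition colour :: "tpt \<Rightarrow> bool" where
  "colour v = (case v of TU i \<Rightarrow> odd i | TM j \<Rightarrow> odd (k + (m + 1 - j))
     | TL i \<Rightarrow> odd (m + (l + 1 - i)) \<noteq> odd (k + m + 1))"

lemma p_props: "p \<in> Part m l" "is_pairing p" "parity_alternating m l p"
  using p by (simp_all add: Po_star_iff)

lemma q_props: "q \<in> Part k m" "is_pairing q" "parity_alternating k m q"
  using q by (simp_all add: Po_star_iff)

lemma partition_q_blocks: "partition_on (top_emb ` points k m) q_blocks"
  unfolding q_blocks_def using q_props(1)
  by (simp add: Part_def partition_on_image_inj inj_top_emb)

lemma partition_p_blocks: "partition_on (bot_emb ` points m l) p_blocks"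
  unfolding p_blocks_def using p_props(1)
  by (simp add: Part_def partition_on_image_inj inj_bot_emb)

lemma disjoint_q_blocks: "disjoint q_blocks"
  using partition_onD2[OF partition_q_blocks] .

lemma disjoint_p_blocks: "disjoint p_blocks"
  using partition_onD2[OF partition_p_blocks] .

lemma card_q_blocks: "B \<in> q_blocks \<Longrightarrow> card B = 2"
  using q_props(2) inj_top_emb
  by (auto simp: q_blocks_def is_pairing_def card_image inj_on_subset)

lemma card_p_blocks: "B \<in> p_blocks \<Longrightarrow> card B = 2"
  using p_props(2) inj_bot_emb
  by (auto simp: p_blocks_def is_pairing_def card_image inj_on_subset)

lemma glued_blocks_eq: "glued_blocks p q = q_blocks \<union> p_blocks"
  by (simp add: glued_blocks_def q_blocks_def p_blocks_def)

lemma Union_q_blocks: "\<Union>q_blocks = top_emb ` points k m"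
  using partition_onD1[OF partition_q_blocks] by simp

lemma Union_p_blocks: "\<Union>p_blocks = bot_emb ` points m l"
  using partition_onD1[OF partition_p_blocks] by simp

lemma mem_glued_points: "v \<in> glued_points \<longleftrightarrow>
    (case v of TU i \<Rightarrow> 1 \<le> i \<and> i \<le> k | TM j \<Rightarrow> 1 \<le> j \<and> j \<le> m | TL i \<Rightarrow> 1 \<le> i \<and> i \<le> l)"
  by (cases v) (auto simp: glued_points_def glued_blocks_eq Union_q_blocks Union_p_blocks
      mem_top_emb_image mem_bot_emb_image)

lemma q_partner_in_block: "B \<in> q_blocks \<Longrightarrow> v \<in> B \<Longrightarrow> B = {v, q_partner v} \<and> q_partner v \<noteq> v"
  unfolding q_partner_def by (rule partner_in_block[OF disjoint_q_blocks card_q_blocks])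

lemma p_partner_in_block: "B \<in> p_blocks \<Longrightarrow> v \<in> B \<Longrightarrow> B = {v, p_partner v} \<and> p_partner v \<noteq> v"
  unfolding p_partner_def by (rule partner_in_block[OF disjoint_p_blocks card_p_blocks])

lemma q_partner_fixes_iff: "q_partner v = v \<longleftrightarrow> v \<notin> \<Union>q_blocks"
  using q_partner_in_block partner_outside[of v q_blocks] by (auto simp: q_partner_def)

lemma p_partner_fixes_iff: "p_partner v = v \<longleftrightarrow> v \<notin> \<Union>p_blocks"
  using p_partner_in_block partner_outside[of v p_blocks] by (auto simp: p_partner_def)

lemma q_partner_fixes_iff_lower_row: "v \<in> glued_points \<Longrightarrow> q_partner v = v \<longleftrightarrow> (\<exists>i. v = TL i)"
  by (cases v) (auto simp: q_partner_fixes_iff Union_q_blocks mem_top_emb_image mem_glued_points)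

lemma p_partner_fixes_iff_upper_row: "v \<in> glued_points \<Longrightarrow> p_partner v = v \<longleftrightarrow> (\<exists>i. v = TU i)"
  by (cases v) (auto simp: p_partner_fixes_iff Union_p_blocks mem_bot_emb_image mem_glued_points)

sublocale involution_pair glued_points q_partner p_partner
proof
  show "finite glued_points"
    by (simp add: glued_points_def glued_blocks_eq Union_q_blocks Union_p_blocks)
  show "q_partner (q_partner v) = v" for v
    unfolding q_partner_def by (rule partner_partner[OF disjoint_q_blocks card_q_blocks])
  show "p_partner (p_partner v) = v" for v
    unfolding p_partner_def by (rule partner_partner[OF disjoint_p_blocks card_p_blocks])
  show "q_partner v \<in> glued_points" if "v \<in> glued_points" for v
  proof (cases "q_partner v = v")
    case False
    then obtain B where "B \<in> q_blocks" "v \<in> B" using q_partner_fixes_iff by blast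
    then show ?thesis
      using q_partner_in_block[of B v] by (auto simp: glued_points_def glued_blocks_eq)
  qed (use that in simp)
  show "p_partner v \<in> glued_points" if "v \<in> glued_points" for v
  proof (cases "p_partner v = v")
    case False
    then obtain B where "B \<in> p_blocks" "v \<in> B" using p_partner_fixes_iff by blast
    then show ?thesis
      using p_partner_in_block[of B v] by (auto simp: glued_points_def glued_blocks_eq)
  qed (use that in simp)
  show "q_partner v \<noteq> v \<or> p_partner v \<noteq> v" if "v \<in> glued_points" for v
    using that q_partner_fixes_iff_lower_row p_partner_fixes_iff_upper_row by auto
qed

lemma connected_rel_eq_adj: "connected_rel (glued_blocks p q) = adj"
proof -
  have "(\<exists>B\<in>q_blocks \<union> p_blocks. v \<in> B \<and> w \<in> B) \<longleftrightarrow> (v, w) \<in> adj" for v w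
  proof -
    have "(\<exists>B\<in>q_blocks. v \<in> B \<and> w \<in> B) \<longleftrightarrow> v \<in> \<Union>q_blocks \<and> (w = v \<or> w = q_partner v)"
      unfolding q_partner_def by (rule same_block_iff_partner[OF disjoint_q_blocks card_q_blocks])
    moreover have "(\<exists>B\<in>p_blocks. v \<in> B \<and> w \<in> B) \<longleftrightarrow> v \<in> \<Union>p_blocks \<and> (w = v \<or> w = p_partner v)"
      unfolding p_partner_def by (rule same_block_iff_partner[OF disjoint_p_blocks card_p_blocks])
    moreover have "v \<in> glued_points \<longleftrightarrow> v \<in> \<Union>q_blocks \<or> v \<in> \<Union>p_blocks"
      by (simp add: glued_points_def glued_blocks_eq)
    moreover have "w = q_partner v \<Longrightarrow> v \<notin> \<Union>q_blocks \<Longrightarrow> w = v"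
      and "w = p_partner v \<Longrightarrow> v \<notin> \<Union>p_blocks \<Longrightarrow> w = v"
      using q_partner_fixes_iff[of v] p_partner_fixes_iff[of v] by simp_all
    ultimately show ?thesis
      unfolding adj_def by blast
  qed
  then show ?thesis unfolding connected_rel_def glued_blocks_eq by blast
qed

lemma colour_top_emb: "colour (top_emb z) \<longleftrightarrow> odd (pos k m z)"
  by (cases z) (simp_all add: colour_def)

lemma colour_bot_emb: "z \<in> points m l \<Longrightarrow> colour (bot_emb z) \<longleftrightarrow> odd (pos m l z) \<noteq> odd (k + m + 1)"
proof (cases z)
  case (Up j)
  moreover assume "z \<in> points m l"
  ultimately have "j \<le> m" by simp
  then show ?thesis using Up by (simp add: colour_def) presburger
qed (simp add: colour_def)

lemma colour_flips_q_partner: "q_partner v \<noteq> v \<Longrightarrow> colour (q_partner v) \<noteq> colour v"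
proof -
  assume moved: "q_partner v \<noteq> v"
  then obtain B where B: "B \<in> q_blocks" "v \<in> B" using q_partner_fixes_iff by blast
  then obtain B0 where B0: "B0 \<in> q" "B = top_emb ` B0" by (auto simp: q_blocks_def)
  moreover have "q_partner v \<in> B" using q_partner_in_block[OF B] by auto
  ultimately obtain a b where ab: "a \<in> B0" "b \<in> B0" "v = top_emb a" "q_partner v = top_emb b"
    using B(2) by blast
  moreover from ab moved have "a \<noteq> b" by auto
  ultimately have "odd (pos k m a + pos k m b)"
    using q_props(3) B0(1) unfolding parity_alternating_def by blast
  then show ?thesis using ab by (simp add: colour_top_emb)
qed

lemma colour_flips_p_partner: "p_partner v \<noteq> v \<Longrightarrow> colour (p_partner v) \<noteq> colour v"
proof -
  assume moved: "p_partner v \<noteq> v"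
  then obtain B where B: "B \<in> p_blocks" "v \<in> B" using p_partner_fixes_iff by blast
  then obtain B0 where B0: "B0 \<in> p" "B = bot_emb ` B0" by (auto simp: p_blocks_def)
  moreover have "p_partner v \<in> B" using p_partner_in_block[OF B] by auto
  ultimately obtain a b where ab: "a \<in> B0" "b \<in> B0" "v = bot_emb a" "p_partner v = bot_emb b"
    using B(2) by blast
  have points: "a \<in> points m l" "b \<in> points m l"
    using ab B0(1) p_props(1) by (auto simp: Part_def partition_on_def)
  from ab moved have "a \<noteq> b" by auto
  then have "odd (pos m l a + pos m l b)"
    using ab p_props(3) B0(1) unfolding parity_alternating_def by blast
  then show ?thesis
    using ab by (simp add: colour_bot_emb[OF points(1)] colour_bot_emb[OF points(2)]) blast
qed

lemma colour_endpoint: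
  assumes "v \<in> glued_points" "path_end v"
  shows "colour v \<longleftrightarrow> (odd (pos k l (outer_pt v)) \<longleftrightarrow> p_partner v = v)"
proof (cases "p_partner v = v")
  case True
  then obtain i where "v = TU i" using p_partner_fixes_iff_upper_row assms(1) by blast
  then show ?thesis using True by (simp add: colour_def outer_pt_def)
next
  case False
  then obtain i where "v = TL i" using q_partner_fixes_iff_lower_row assms by blast
  moreover have "i \<le> l" using assms(1) \<open>v = TL i\<close> by (simp add: mem_glued_points)
  ultimately show ?thesis using False by (simp add: colour_def outer_pt_def) presburger
qed

lemma outer_pt_in_points: "v \<in> glued_points \<Longrightarrow> path_end v \<Longrightarrow> outer_pt v \<in> points k l"
  using q_partner_fixes_iff_lower_row p_partner_fixes_iff_upper_row
  by (auto simp: outer_pt_def mem_glued_points)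

lemma outer_pt_eq_iff:
  "v \<in> glued_points \<Longrightarrow> path_end v \<Longrightarrow> w \<in> glued_points \<Longrightarrow> path_end w \<Longrightarrow>
    outer_pt v = outer_pt w \<longleftrightarrow> v = w"
  using q_partner_fixes_iff_lower_row p_partner_fixes_iff_upper_row by (auto simp: outer_pt_def)

lemma outer_part_eq: "C \<subseteq> glued_points \<Longrightarrow> outer_part C = outer_pt ` {v \<in> C. path_end v}"
proof -
  assume "C \<subseteq> glued_points"
  then have "{v \<in> C. path_end v} = TU ` {i. TU i \<in> C} \<union> TL ` {i. TL i \<in> C}"
    using q_partner_fixes_iff_lower_row p_partner_fixes_iff_upper_row by blast
  then show ?thesis
    by (simp add: outer_part_def image_Un image_image outer_pt_def) blast
qed

lemma block_of_endpoint:
  assumes z: "z \<in> glued_points" "path_end z"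
  obtains y where "outer_part (adj\<^sup>* `` {z}) = {outer_pt z, outer_pt y}" "outer_pt z \<noteq> outer_pt y"
    "outer_pt z \<in> points k l" "outer_pt y \<in> points k l"
    "odd (pos k l (outer_pt z) + pos k l (outer_pt y))"
proof -
  obtain y where y: "y \<noteq> z" "{v \<in> adj\<^sup>* `` {z}. path_end v} = {z, y}"
    "colour y = colour z \<longleftrightarrow> (q_partner y = y \<longleftrightarrow> p_partner z = z)"
    using component_endpoints[where \<psi> = colour, OF z colour_flips_q_partner colour_flips_p_partner]
    by blast
  have y_end: "y \<in> glued_points" "path_end y"
    using y(2) rtrancl_adj_in_D z(1) by blast+
  have "adj\<^sup>* `` {z} \<subseteq> glued_points" using rtrancl_adj_in_D z(1) by blast
  then have "outer_part (adj\<^sup>* `` {z}) = {outer_pt z, outer_pt y}"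
    by (simp only: outer_part_eq y(2) image_insert image_empty)
  moreover have "outer_pt z \<noteq> outer_pt y" using outer_pt_eq_iff[OF z y_end] y(1) by simp
  moreover have "odd (pos k l (outer_pt z) + pos k l (outer_pt y))"
    using y(3) y_end(2) colour_endpoint[OF z] colour_endpoint[OF y_end]
      no_common_fixpoint[OF y_end(1)]
    by auto
  ultimately show ?thesis
    using that outer_pt_in_points[OF z] outer_pt_in_points[OF y_end] by blast
qed

lemma comp_eq: "comp p q = (\<lambda>x. outer_part (adj\<^sup>* `` {x})) ` glued_points - {{}}"
  unfolding comp_def Let_def connected_rel_eq_adj glued_points_def by (simp add: image_image)

lemma comp_block:
  assumes "X \<in> comp p q"
  shows "\<exists>a b. X = {a, b} \<and> a \<noteq> b \<and> a \<in> points k l \<and> b \<in> points k l \<and> odd (pos k l a + pos k l b)"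
proof -
  obtain x where x: "x \<in> glued_points" "X = outer_part (adj\<^sup>* `` {x})" "X \<noteq> {}"
    using assms comp_eq by auto
  have "adj\<^sup>* `` {x} \<subseteq> glued_points" using rtrancl_adj_in_D x(1) by blast
  then obtain z where z: "z \<in> adj\<^sup>* `` {x}" "path_end z" "z \<in> glued_points"
    using x(2,3) outer_part_eq by auto
  then have "X = outer_part (adj\<^sup>* `` {z})" using x(2) component_eq by simp
  with block_of_endpoint[OF z(3,2)] show ?thesis by metis
qed

lemma Po_star_comp: "comp p q \<in> Po_star k l"
proof -
  have "\<Union>(comp p q) \<subseteq> points k l" using comp_block by blast
  moreover have "points k l \<subseteq> \<Union>(comp p q)"
  proof
    fix w assume w: "w \<in> points k l"
    obtain t where "t \<in> glued_points" "w \<in> outer_part (adj\<^sup>* `` {t})"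
    proof (cases w)
      case (Up i)
      with w show ?thesis using that[of "TU i"] by (auto simp: mem_glued_points outer_part_def)
    next
      case (Lo i)
      with w show ?thesis using that[of "TL i"] by (auto simp: mem_glued_points outer_part_def)
    qed
    then show "w \<in> \<Union>(comp p q)" unfolding comp_eq by blast
  qed
  moreover have "disjoint (comp p q)"
  proof (rule disjointI)
    fix X Y assume "X \<in> comp p q" "Y \<in> comp p q" "X \<noteq> Y"
    then obtain x y where "X = outer_part (adj\<^sup>* `` {x})" "Y = outer_part (adj\<^sup>* `` {y})"
      unfolding comp_eq by blast
    moreover have "adj\<^sup>* `` {x} \<inter> adj\<^sup>* `` {y} = {}" if "adj\<^sup>* `` {x} \<noteq> adj\<^sup>* `` {y}"
      using that component_eq by blast
    ultimately show "X \<inter> Y = {}"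
      using \<open>X \<noteq> Y\<close> unfolding outer_part_def by blast
  qed
  moreover have "{} \<notin> comp p q" by (simp add: comp_eq)
  ultimately have "comp p q \<in> Part k l"
    by (simp add: Part_def partition_on_def)
  moreover have "is_pairing (comp p q)"
    unfolding is_pairing_def using comp_block by fastforce
  moreover have "parity_alternating k l (comp p q)"
    unfolding parity_alternating_def using comp_block by (fastforce simp: add.commute)
  ultimately show ?thesis by (simp add: Po_star_iff)
qed

end

theorem proposition6p5:
  shows "full_category_of_partitions Po_star"
  unfolding full_category_of_partitions_def
proof (intro conjI allI impI)
  show "Po_star k l \<subseteq> Part k l" for k l
    by (auto simp: Po_star_iff)
  show "tensor k l p q \<in> Po_star (k + k') (l + l')"
    if "p \<in> Po_star k l" "q \<in> Po_star k' l'" for k l k' l' p q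
    using that by (rule Po_star_tensor)
  show "comp p q \<in> Po_star k l" if "p \<in> Po_star m l" "q \<in> Po_star k m" for k l m p q
    using that by (intro composable.Po_star_comp composable.intro)
  show "star p \<in> Po_star l k" if "p \<in> Po_star k l" for k l p
    using that by (rule Po_star_star)
  show "id_part \<in> Po_star 1 1" by (rule id_part_in_Po_star)
  show "cap_part \<in> Po_star 0 2" by (rule cap_part_in_Po_star)
qed

end
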